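(* Let $M$ be a smooth manifold, $\nabla$ an affine connection on $M$, and $(\hat J_1,\hat J_2,\hat J_3)$ a generalized almost para-quaternionic structure on $M$. If $\hat J_1$ and $\hat J_2$ are $\nabla$-integrable, then $\hat J_3$ is $\nabla$-integrable. Moreover, if $\hat J_2$ and $\hat J_3$ are $\nabla$-integrable, then $\hat J_1$ is $\nabla$-integrable.
   Context: A generalized almost para-quaternionic structure: endomorphisms $\hat J_1,\hat J_2,\hat J_3$ of $TM\oplus T^*M$ with $\hat J_1^2=-I$, $\hat J_2^2=\hat J_3^2=I$, $\hat J_1\hat J_2=-\hat J_2\hat J_1$, $\hat J_3=\hat J_1\hat J_2$. The $\nabla$-bracket: $[X+\eta,Y+\beta]_\nabla:=[X,Y]+\nabla_X\beta-\nabla_Y\eta$. $N^\nabla_{\hat K}(\sigma,\tau):=[\hat K\sigma,\hat K\tau]_\nabla-\hat K[\hat K\sigma,\tau]_\nabla-\hat K[\sigma,\hat K\tau]_\nabla+\hat K^2[\sigma,\tau]_\nabla$; $\hat K$ is $\nabla$-integrable if $N^\nabla_{\hat K}=0$. *)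

theory Defs
  imports "HOL-Analysis.Analysis"
begin

fun Ck :: "nat \<Rightarrow> 'a::euclidean_space set \<Rightarrow> ('a \<Rightarrow> 'b::real_normed_vector) \<Rightarrow> bool" where
  "Ck 0 U f = continuous_on U f"
| "Ck (Suc k) U f =
     ((\<forall>x\<in>U. f differentiable (at x)) \<and>
      (\<forall>v. Ck k U (\<lambda>x. frechet_derivative f (at x) v)))"

definition smooth_on :: "'a::euclidean_space set \<Rightarrow> ('a \<Rightarrow> 'b::real_normed_vector) \<Rightarrow> bool" where
  "smooth_on U f \<longleftrightarrow> (\<forall>k. Ck k U f)"

definition smooth_manifold :: "'m topology \<Rightarrow> (('m \<Rightarrow> 'e::euclidean_space) \<times> 'm set) set \<Rightarrow> bool" where
  "smooth_manifold T A \<longleftrightarrow>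
     Hausdorff_space T \<and> second_countable T \<and>
     \<Union>(snd ` A) = topspace T \<and>
     (\<forall>(\<phi>, U)\<in>A. openin T U \<and> open (\<phi> ` U) \<and>
        homeomorphic_map (subtopology T U) (top_of_set (\<phi> ` U)) \<phi>) \<and>
     (\<forall>(\<phi>, U)\<in>A. \<forall>(\<psi>, V)\<in>A. smooth_on (\<phi> ` (U \<inter> V)) (\<psi> \<circ> inv_into U \<phi>))"

definition smooth_functions :: "'m topology \<Rightarrow> (('m \<Rightarrow> 'e::euclidean_space) \<times> 'm set) set \<Rightarrow> ('m \<Rightarrow> real) set" where
  "smooth_functions T A =
     {f. (\<forall>(\<phi>, U)\<in>A. smooth_on (\<phi> ` U) (f \<circ> inv_into U \<phi>)) \<and> (\<forall>x. x \<notin> topspace T \<longrightarrow> f x = 0)}"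

type_synonym 'm fn = "'m \<Rightarrow> real"
type_synonym 'm vfield = "'m fn \<Rightarrow> 'm fn"
type_synonym 'm oneform = "'m vfield \<Rightarrow> 'm fn"
type_synonym 'm gsec = "'m vfield \<times> 'm oneform"

section \<open>Vector fields (derivations of C^\<infinity>(M)) and 1-forms (C^\<infinity>(M)-linear maps on vector fields)\<close>

definition vector_field :: "'m fn set \<Rightarrow> 'm vfield \<Rightarrow> bool" where
  "vector_field S X \<longleftrightarrow>
     (\<forall>f\<in>S. X f \<in> S) \<and> (\<forall>f. f \<notin> S \<longrightarrow> X f = (\<lambda>_. 0)) \<and>
     (\<forall>f\<in>S. \<forall>g\<in>S. \<forall>a b::real. X (\<lambda>x. a * f x + b * g x) = (\<lambda>x. a * X f x + b * X g x)) \<and>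
     (\<forall>f\<in>S. \<forall>g\<in>S. X (\<lambda>x. f x * g x) = (\<lambda>x. f x * X g x + g x * X f x))"

definition vf_add :: "'m vfield \<Rightarrow> 'm vfield \<Rightarrow> 'm vfield" where
  "vf_add X Y = (\<lambda>g x. X g x + Y g x)"

definition vf_smul :: "'m fn \<Rightarrow> 'm vfield \<Rightarrow> 'm vfield" where
  "vf_smul f X = (\<lambda>g x. f x * X g x)"

definition lie :: "'m fn set \<Rightarrow> 'm vfield \<Rightarrow> 'm vfield \<Rightarrow> 'm vfield" where
  "lie S X Y = (\<lambda>g. if g \<in> S then (\<lambda>x. X (Y g) x - Y (X g) x) else (\<lambda>_. 0))"

definition one_form :: "'m fn set \<Rightarrow> 'm oneform \<Rightarrow> bool" where
  "one_form S \<eta> \<longleftrightarrow>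
     (\<forall>X. vector_field S X \<longrightarrow> \<eta> X \<in> S) \<and>
     (\<forall>X. \<not> vector_field S X \<longrightarrow> \<eta> X = (\<lambda>_. 0)) \<and>
     (\<forall>f\<in>S. \<forall>X Y. vector_field S X \<longrightarrow> vector_field S Y \<longrightarrow>
        \<eta> (vf_add (vf_smul f X) Y) = (\<lambda>x. f x * \<eta> X x + \<eta> Y x))"

definition affine_connection :: "'m fn set \<Rightarrow> ('m vfield \<Rightarrow> 'm vfield \<Rightarrow> 'm vfield) \<Rightarrow> bool" where
  "affine_connection S nabla \<longleftrightarrow>
     (\<forall>X Y. vector_field S X \<longrightarrow> vector_field S Y \<longrightarrow> vector_field S (nabla X Y)) \<and>
     (\<forall>f\<in>S. \<forall>X Y Z. vector_field S X \<longrightarrow> vector_field S Y \<longrightarrow> vector_field S Z \<longrightarrow>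
        nabla (vf_add (vf_smul f X) Y) Z = vf_add (vf_smul f (nabla X Z)) (nabla Y Z)) \<and>
     (\<forall>X Y Z. vector_field S X \<longrightarrow> vector_field S Y \<longrightarrow> vector_field S Z \<longrightarrow>
        nabla X (vf_add Y Z) = vf_add (nabla X Y) (nabla X Z)) \<and>
     (\<forall>f\<in>S. \<forall>X Y. vector_field S X \<longrightarrow> vector_field S Y \<longrightarrow>
        nabla X (vf_smul f Y) = vf_add (vf_smul (X f) Y) (vf_smul f (nabla X Y)))"

definition nabla_form :: "'m fn set \<Rightarrow> ('m vfield \<Rightarrow> 'm vfield \<Rightarrow> 'm vfield) \<Rightarrow> 'm vfield \<Rightarrow> 'm oneform \<Rightarrow> 'm oneform" where
  "nabla_form S nabla X \<beta> =
     (\<lambda>Y. if vector_field S Y then (\<lambda>x. X (\<beta> Y) x - \<beta> (nabla X Y) x) else (\<lambda>_. 0))"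

definition gsections :: "'m fn set \<Rightarrow> 'm gsec set" where
  "gsections S = {(X, \<eta>). vector_field S X \<and> one_form S \<eta>}"

definition sec_add :: "'m gsec \<Rightarrow> 'm gsec \<Rightarrow> 'm gsec" where
  "sec_add \<sigma> \<tau> = (\<lambda>g x. fst \<sigma> g x + fst \<tau> g x, \<lambda>Y x. snd \<sigma> Y x + snd \<tau> Y x)"

definition sec_diff :: "'m gsec \<Rightarrow> 'm gsec \<Rightarrow> 'm gsec" where
  "sec_diff \<sigma> \<tau> = (\<lambda>g x. fst \<sigma> g x - fst \<tau> g x, \<lambda>Y x. snd \<sigma> Y x - snd \<tau> Y x)"

definition sec_neg :: "'m gsec \<Rightarrow> 'm gsec" where
  "sec_neg \<sigma> = (\<lambda>g x. - fst \<sigma> g x, \<lambda>Y x. - snd \<sigma> Y x)"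

definition sec_smul :: "'m fn \<Rightarrow> 'm gsec \<Rightarrow> 'm gsec" where
  "sec_smul f \<sigma> = (\<lambda>g x. f x * fst \<sigma> g x, \<lambda>Y x. f x * snd \<sigma> Y x)"

definition sec_zero :: "'m gsec" where
  "sec_zero = (\<lambda>g x. 0, \<lambda>Y x. 0)"

text \<open>Endomorphisms of the bundle TM \<oplus> T*M = C^\<infinity>(M)-linear maps of its sections.\<close>
definition bundle_endo :: "'m fn set \<Rightarrow> ('m gsec \<Rightarrow> 'm gsec) \<Rightarrow> bool" where
  "bundle_endo S K \<longleftrightarrow>
     (\<forall>\<sigma>\<in>gsections S. K \<sigma> \<in> gsections S) \<and>
     (\<forall>f\<in>S. \<forall>\<sigma>\<in>gsections S. \<forall>\<tau>\<in>gsections S.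
        K (sec_add (sec_smul f \<sigma>) \<tau>) = sec_add (sec_smul f (K \<sigma>)) (K \<tau>))"

definition gen_almost_paraquaternionic ::
  "'m fn set \<Rightarrow> ('m gsec \<Rightarrow> 'm gsec) \<Rightarrow> ('m gsec \<Rightarrow> 'm gsec) \<Rightarrow> ('m gsec \<Rightarrow> 'm gsec) \<Rightarrow> bool" where
  "gen_almost_paraquaternionic S J1 J2 J3 \<longleftrightarrow>
     bundle_endo S J1 \<and> bundle_endo S J2 \<and> bundle_endo S J3 \<and>
     (\<forall>\<sigma>\<in>gsections S.
        J1 (J1 \<sigma>) = sec_neg \<sigma> \<and> J2 (J2 \<sigma>) = \<sigma> \<and> J3 (J3 \<sigma>) = \<sigma> \<and>
        J1 (J2 \<sigma>) = sec_neg (J2 (J1 \<sigma>)) \<and> J3 \<sigma> = J1 (J2 \<sigma>))"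

definition nabla_bracket :: "'m fn set \<Rightarrow> ('m vfield \<Rightarrow> 'm vfield \<Rightarrow> 'm vfield) \<Rightarrow> 'm gsec \<Rightarrow> 'm gsec \<Rightarrow> 'm gsec" where
  "nabla_bracket S nabla \<sigma> \<tau> =
     (lie S (fst \<sigma>) (fst \<tau>),
      \<lambda>Z x. nabla_form S nabla (fst \<sigma>) (snd \<tau>) Z x - nabla_form S nabla (fst \<tau>) (snd \<sigma>) Z x)"

definition nabla_nijenhuis :: "'m fn set \<Rightarrow> ('m vfield \<Rightarrow> 'm vfield \<Rightarrow> 'm vfield) \<Rightarrow> ('m gsec \<Rightarrow> 'm gsec) \<Rightarrow> 'm gsec \<Rightarrow> 'm gsec \<Rightarrow> 'm gsec" where
  "nabla_nijenhuis S nabla K \<sigma> \<tau> =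
     sec_add
       (sec_diff (sec_diff (nabla_bracket S nabla (K \<sigma>) (K \<tau>))
                           (K (nabla_bracket S nabla (K \<sigma>) \<tau>)))
                 (K (nabla_bracket S nabla \<sigma> (K \<tau>))))
       (K (K (nabla_bracket S nabla \<sigma> \<tau>)))"

definition nabla_integrable :: "'m fn set \<Rightarrow> ('m vfield \<Rightarrow> 'm vfield \<Rightarrow> 'm vfield) \<Rightarrow> ('m gsec \<Rightarrow> 'm gsec) \<Rightarrow> bool" where
  "nabla_integrable S nabla K \<longleftrightarrow>
     (\<forall>\<sigma>\<in>gsections S. \<forall>\<tau>\<in>gsections S. nabla_nijenhuis S nabla K \<sigma> \<tau> = sec_zero)"

end

theory Submission
  imports Defs "HOL-Library.Function_Algebras"
begin

(* For anticommuting additive maps P, Q with Q^2 = 1 and P^2 = -1 or P^2 = 1, put R = P Q.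
   Expanding with the biadditivity of the bracket,
     2 N_R(x,y) = - N_P(x,y) - Q N_P(x,Qy) - Q N_P(Qx,y) + N_P(Qx,Qy)
                  + s N_Q(x,y) - P N_Q(x,Py) - P N_Q(Px,y) + N_Q(Px,Py),
   where s = -1 if P^2 = 1 and s = 1 if P^2 = -1, so N_P = N_Q = 0 forces N_R = 0.
   Take (P, Q, R) = (J1, J2, J3) for the first claim and (J3, J2, J1) for the second.
   The geometry enters only through the biadditivity of the nabla-bracket on sections of
   TM + T*M and the additivity of the J_i. *)

section \<open>Nijenhuis forms of anticommuting products\<close>

definition additive_endo_on :: "'a::ab_group_add set \<Rightarrow> ('a \<Rightarrow> 'a) \<Rightarrow> bool" where
  "additive_endo_on G K \<longleftrightarrow> (\<forall>u\<in>G. K u \<in> G) \<and> (\<forall>u\<in>G. \<forall>v\<in>G. K (u - v) = K u - K v)"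

definition nijenhuis :: "('a::ab_group_add \<Rightarrow> 'a \<Rightarrow> 'a) \<Rightarrow> ('a \<Rightarrow> 'a) \<Rightarrow> 'a \<Rightarrow> 'a \<Rightarrow> 'a" where
  "nijenhuis b K u v = b (K u) (K v) - K (b (K u) v) - K (b u (K v)) + K (K (b u v))"

locale biadditive_on =
  fixes G :: "'a::ab_group_add set" and b :: "'a \<Rightarrow> 'a \<Rightarrow> 'a"
  assumes zero_mem: "0 \<in> G"
    and diff_mem: "u \<in> G \<Longrightarrow> v \<in> G \<Longrightarrow> u - v \<in> G"
    and bracket_mem: "u \<in> G \<Longrightarrow> v \<in> G \<Longrightarrow> b u v \<in> G"
    and bracket_diff_left: "u \<in> G \<Longrightarrow> v \<in> G \<Longrightarrow> w \<in> G \<Longrightarrow> b (u - v) w = b u w - b v w"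
    and bracket_diff_right: "u \<in> G \<Longrightarrow> v \<in> G \<Longrightarrow> w \<in> G \<Longrightarrow> b w (u - v) = b w u - b w v"
begin

lemma minus_mem: "u \<in> G \<Longrightarrow> - u \<in> G"
  using diff_mem[OF zero_mem] by simp

lemma add_mem: "u \<in> G \<Longrightarrow> v \<in> G \<Longrightarrow> u + v \<in> G"
  using diff_mem[of u "- v"] minus_mem by simp

lemma bracket_minus_left: "u \<in> G \<Longrightarrow> w \<in> G \<Longrightarrow> b (- u) w = - b u w"
  using bracket_diff_left[OF zero_mem zero_mem] bracket_diff_left[OF zero_mem] by (metis diff_0 diff_self)

lemma bracket_minus_right: "u \<in> G \<Longrightarrow> w \<in> G \<Longrightarrow> b w (- u) = - b w u"
  using bracket_diff_right[OF zero_mem zero_mem] bracket_diff_right[OF zero_mem] by (metis diff_0 diff_self)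

lemma bracket_add_left: "u \<in> G \<Longrightarrow> v \<in> G \<Longrightarrow> w \<in> G \<Longrightarrow> b (u + v) w = b u w + b v w"
  using bracket_diff_left[of u "- v" w] by (simp add: minus_mem bracket_minus_left)

lemma bracket_add_right: "u \<in> G \<Longrightarrow> v \<in> G \<Longrightarrow> w \<in> G \<Longrightarrow> b w (u + v) = b w u + b w v"
  using bracket_diff_right[of u "- v" w] by (simp add: minus_mem bracket_minus_right)

lemma additive_endo_onD:
  assumes "additive_endo_on G K"
  shows endo_mem: "u \<in> G \<Longrightarrow> K u \<in> G"
    and endo_diff: "u \<in> G \<Longrightarrow> v \<in> G \<Longrightarrow> K (u - v) = K u - K v"
    and endo_zero: "K 0 = 0"
    and endo_minus: "u \<in> G \<Longrightarrow> K (- u) = - K u"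
    and endo_add: "u \<in> G \<Longrightarrow> v \<in> G \<Longrightarrow> K (u + v) = K u + K v"
proof -
  show mem: "u \<in> G \<Longrightarrow> K u \<in> G" for u
    using assms by (simp add: additive_endo_on_def)
  show diff: "u \<in> G \<Longrightarrow> v \<in> G \<Longrightarrow> K (u - v) = K u - K v" for u v
    using assms by (simp add: additive_endo_on_def)
  show zero: "K 0 = 0"
    using diff[OF zero_mem zero_mem] by simp
  show minus: "K (- u) = - K u" if "u \<in> G" for u
    using diff[OF zero_mem that] zero by simp
  show "u \<in> G \<Longrightarrow> v \<in> G \<Longrightarrow> K (u + v) = K u + K v"
    using diff[of u "- v"] minus minus_mem by simp
qed

lemmas additivity_rules = minus_mem add_mem diff_mem bracket_mem
  bracket_minus_left bracket_minus_right bracket_add_left bracket_add_right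
  bracket_diff_left bracket_diff_right

lemma double_nijenhuis_product_complex:
  assumes P: "additive_endo_on G P" and Q: "additive_endo_on G Q"
    and PP: "\<And>u. u \<in> G \<Longrightarrow> P (P u) = - u" and QQ: "\<And>u. u \<in> G \<Longrightarrow> Q (Q u) = u"
    and QP: "\<And>u. u \<in> G \<Longrightarrow> Q (P u) = - P (Q u)" and R: "\<And>u. u \<in> G \<Longrightarrow> R u = P (Q u)"
    and x: "x \<in> G" and y: "y \<in> G"
  shows "nijenhuis b R x y + nijenhuis b R x y =
    - nijenhuis b P x y - Q (nijenhuis b P x (Q y)) - Q (nijenhuis b P (Q x) y) + nijenhuis b P (Q x) (Q y)
    + nijenhuis b Q x y - P (nijenhuis b Q x (P y)) - P (nijenhuis b Q (P x) y) + nijenhuis b Q (P x) (P y)"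
  unfolding nijenhuis_def
  by (simp add: additivity_rules additive_endo_onD[OF P] additive_endo_onD[OF Q] PP QQ QP R x y
      algebra_simps)

lemma double_nijenhuis_product_paracomplex:
  assumes P: "additive_endo_on G P" and Q: "additive_endo_on G Q"
    and PP: "\<And>u. u \<in> G \<Longrightarrow> P (P u) = u" and QQ: "\<And>u. u \<in> G \<Longrightarrow> Q (Q u) = u"
    and QP: "\<And>u. u \<in> G \<Longrightarrow> Q (P u) = - P (Q u)" and R: "\<And>u. u \<in> G \<Longrightarrow> R u = P (Q u)"
    and x: "x \<in> G" and y: "y \<in> G"
  shows "nijenhuis b R x y + nijenhuis b R x y =
    - nijenhuis b P x y - Q (nijenhuis b P x (Q y)) - Q (nijenhuis b P (Q x) y) + nijenhuis b P (Q x) (Q y)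
    - nijenhuis b Q x y - P (nijenhuis b Q x (P y)) - P (nijenhuis b Q (P x) y) + nijenhuis b Q (P x) (P y)"
  unfolding nijenhuis_def
  by (simp add: additivity_rules additive_endo_onD[OF P] additive_endo_onD[OF Q] PP QQ QP R x y
      algebra_simps)

lemma nijenhuis_product_vanishes:
  assumes P: "additive_endo_on G P" and Q: "additive_endo_on G Q"
    and PP: "(\<forall>u\<in>G. P (P u) = - u) \<or> (\<forall>u\<in>G. P (P u) = u)" and QQ: "\<And>u. u \<in> G \<Longrightarrow> Q (Q u) = u"
    and QP: "\<And>u. u \<in> G \<Longrightarrow> Q (P u) = - P (Q u)" and R: "\<And>u. u \<in> G \<Longrightarrow> R u = P (Q u)"
    and NP: "\<forall>u\<in>G. \<forall>v\<in>G. nijenhuis b P u v = 0" and NQ: "\<forall>u\<in>G. \<forall>v\<in>G. nijenhuis b Q u v = 0"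
    and no_2_torsion: "\<And>u::'a. u + u = 0 \<Longrightarrow> u = 0"
    and x: "x \<in> G" and y: "y \<in> G"
  shows "nijenhuis b R x y = 0"
proof (rule no_2_torsion)
  from PP show "nijenhuis b R x y + nijenhuis b R x y = 0"
  proof
    assume "\<forall>u\<in>G. P (P u) = - u"
    then show ?thesis
      using double_nijenhuis_product_complex[OF P Q _ QQ QP R x y]
      by (simp add: NP NQ x y additive_endo_onD[OF P] additive_endo_onD[OF Q])
  next
    assume "\<forall>u\<in>G. P (P u) = u"
    then show ?thesis
      using double_nijenhuis_product_paracomplex[OF P Q _ QQ QP R x y]
      by (simp add: NP NQ x y additive_endo_onD[OF P] additive_endo_onD[OF Q])
  qed
qed

end


section \<open>The \<open>\<nabla>\<close>-bracket on sections of \<open>TM \<oplus> T*M\<close>\<close>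

lemma vf_add_eq_plus: "vf_add X Y = X + Y"
  by (simp add: vf_add_def fun_eq_iff)

lemma sec_add_eq_plus: "sec_add \<sigma> \<tau> = \<sigma> + \<tau>"
  and sec_diff_eq_minus: "sec_diff \<sigma> \<tau> = \<sigma> - \<tau>"
  and sec_neg_eq_uminus: "sec_neg \<sigma> = - \<sigma>"
  and sec_zero_eq_zero: "sec_zero = 0"
  by (simp_all add: sec_add_def sec_diff_def sec_neg_def sec_zero_def prod_eq_iff fun_eq_iff)

lemma gsec_no_2_torsion:
  assumes "(u :: 'm gsec) + u = 0"
  shows "u = 0"
proof -
  have "fst u g x + fst u g x = 0" "snd u Y x + snd u Y x = 0" for g x Y
    using assms by (simp_all add: prod_eq_iff fun_eq_iff)
  then show ?thesis by (simp add: prod_eq_iff fun_eq_iff)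
qed

lemma vector_fieldD:
  assumes "vector_field S X"
  shows vector_field_mem: "f \<in> S \<Longrightarrow> X f \<in> S"
    and vector_field_outside: "f \<notin> S \<Longrightarrow> X f = (\<lambda>_. 0)"
    and vector_field_lincomb:
      "f \<in> S \<Longrightarrow> g \<in> S \<Longrightarrow> X (\<lambda>x. a * f x + b * g x) = (\<lambda>x. a * X f x + b * X g x)"
    and vector_field_leibniz: "f \<in> S \<Longrightarrow> g \<in> S \<Longrightarrow> X (\<lambda>x. f x * g x) = (\<lambda>x. f x * X g x + g x * X f x)"
  using assms unfolding vector_field_def by auto

lemma vector_field_apply_add:
  "vector_field S X \<Longrightarrow> f \<in> S \<Longrightarrow> g \<in> S \<Longrightarrow> X (\<lambda>x. f x + g x) = (\<lambda>x. X f x + X g x)"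
  using vector_field_lincomb[of S X f g 1 1] by simp

lemma vector_field_apply_diff:
  "vector_field S X \<Longrightarrow> f \<in> S \<Longrightarrow> g \<in> S \<Longrightarrow> X (\<lambda>x. f x - g x) = (\<lambda>x. X f x - X g x)"
  using vector_field_lincomb[of S X f g 1 "-1"] by simp

lemma one_formD:
  assumes "one_form S \<eta>"
  shows one_form_mem: "vector_field S X \<Longrightarrow> \<eta> X \<in> S"
    and one_form_outside: "\<not> vector_field S X \<Longrightarrow> \<eta> X = (\<lambda>_. 0)"
    and one_form_linear: "f \<in> S \<Longrightarrow> vector_field S X \<Longrightarrow> vector_field S Y \<Longrightarrow>
      \<eta> (vf_smul f X + Y) = (\<lambda>x. f x * \<eta> X x + \<eta> Y x)"
  using assms unfolding one_form_def vf_add_eq_plus by auto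

lemma affine_connectionD:
  assumes "affine_connection S nabla"
  shows connection_vector_field:
      "vector_field S X \<Longrightarrow> vector_field S Y \<Longrightarrow> vector_field S (nabla X Y)"
    and connection_linear_left: "f \<in> S \<Longrightarrow> vector_field S X \<Longrightarrow> vector_field S Y \<Longrightarrow> vector_field S Z \<Longrightarrow>
      nabla (vf_smul f X + Y) Z = vf_smul f (nabla X Z) + nabla Y Z"
    and connection_add_right: "vector_field S X \<Longrightarrow> vector_field S Y \<Longrightarrow> vector_field S Z \<Longrightarrow>
      nabla X (Y + Z) = nabla X Y + nabla X Z"
    and connection_leibniz: "f \<in> S \<Longrightarrow> vector_field S X \<Longrightarrow> vector_field S Y \<Longrightarrow>
      nabla X (vf_smul f Y) = vf_smul (X f) Y + vf_smul f (nabla X Y)"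
  using assms unfolding affine_connection_def vf_add_eq_plus by auto

lemma nabla_nijenhuis_eq:
  "nabla_nijenhuis S nabla K \<sigma> \<tau> =
     nabla_bracket S nabla (K \<sigma>) (K \<tau>) - K (nabla_bracket S nabla (K \<sigma>) \<tau>)
     - K (nabla_bracket S nabla \<sigma> (K \<tau>)) + K (K (nabla_bracket S nabla \<sigma> \<tau>))"
  unfolding nabla_nijenhuis_def sec_add_eq_plus sec_diff_eq_minus ..

locale unital_function_algebra =
  fixes S :: "'m fn set" and e :: "'m fn"
  assumes zero_mem: "(\<lambda>x. 0) \<in> S"
    and unit_mem: "e \<in> S"
    and lincomb_mem: "f \<in> S \<Longrightarrow> g \<in> S \<Longrightarrow> (\<lambda>x. a * f x + b * g x) \<in> S"
    and mult_mem: "f \<in> S \<Longrightarrow> g \<in> S \<Longrightarrow> (\<lambda>x. f x * g x) \<in> S"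
    and unit_mult: "f \<in> S \<Longrightarrow> e x * f x = f x"
begin

lemma add_mem: "f \<in> S \<Longrightarrow> g \<in> S \<Longrightarrow> (\<lambda>x. f x + g x) \<in> S"
  using lincomb_mem[of f g 1 1] by simp

lemma diff_mem: "f \<in> S \<Longrightarrow> g \<in> S \<Longrightarrow> (\<lambda>x. f x - g x) \<in> S"
  using lincomb_mem[of f g 1 "-1"] by simp

lemma minus_unit_mem: "(\<lambda>x. - e x) \<in> S"
  using lincomb_mem[OF zero_mem unit_mem, of 0 "-1"] by simp

lemma vector_field_unit_mult: "vector_field S X \<Longrightarrow> e x * X f x = X f x"
  by (cases "f \<in> S") (auto simp: vector_field_mem unit_mult vector_field_outside)

lemma one_form_unit_mult: "one_form S \<eta> \<Longrightarrow> e x * \<eta> X x = \<eta> X x"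
  by (cases "vector_field S X") (auto simp: one_form_mem unit_mult one_form_outside)

text \<open>The constant \<open>-1\<close> need not lie in \<open>S\<close>; \<open>-e\<close> takes its place in all \<open>C\<^sup>\<infinity>(M)\<close>-linearity arguments.\<close>

lemma vf_smul_minus_unit: "vector_field S X \<Longrightarrow> vf_smul (\<lambda>x. - e x) X + Y = Y - X"
  by (simp add: vf_smul_def fun_eq_iff vector_field_unit_mult)

lemma sec_smul_minus_unit:
  assumes "\<tau> \<in> gsections S"
  shows "sec_add (sec_smul (\<lambda>x. - e x) \<tau>) \<sigma> = \<sigma> - \<tau>"
proof -
  obtain X \<eta> where \<tau>: "\<tau> = (X, \<eta>)" "vector_field S X" "one_form S \<eta>"
    using assms by (auto simp: gsections_def)
  show ?thesis
    by (simp add: \<tau> sec_add_def sec_smul_def prod_eq_iff fun_eq_iff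
        vector_field_unit_mult[OF \<tau>(2)] one_form_unit_mult[OF \<tau>(3)])
qed

lemma vector_field_zero: "vector_field S 0"
  by (simp add: vector_field_def zero_mem zero_fun_def)

lemma vector_field_diff:
  assumes "vector_field S X" and "vector_field S Y"
  shows "vector_field S (X - Y)"
  using assms unfolding vector_field_def fun_diff_def
  by (auto simp: vector_field_mem vector_field_outside vector_field_lincomb vector_field_leibniz
      diff_mem algebra_simps)

lemma vector_field_add:
  assumes "vector_field S X" and "vector_field S Y"
  shows "vector_field S (X + Y)"
  using assms unfolding vector_field_def plus_fun_def
  by (auto simp: vector_field_mem vector_field_outside vector_field_lincomb vector_field_leibniz
      add_mem algebra_simps)

lemma vector_field_vf_smul:
  assumes "f \<in> S" and "vector_field S X"
  shows "vector_field S (vf_smul f X)"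
  using assms unfolding vector_field_def vf_smul_def
  by (auto simp: vector_field_mem vector_field_outside vector_field_lincomb vector_field_leibniz
      mult_mem algebra_simps)

lemma vector_field_lie:
  assumes X: "vector_field S X" and Y: "vector_field S Y"
  shows "vector_field S (lie S X Y)"
  unfolding vector_field_def lie_def
  by (auto simp: vector_field_mem[OF X] vector_field_mem[OF Y] diff_mem lincomb_mem mult_mem
      vector_field_lincomb[OF X] vector_field_lincomb[OF Y] vector_field_leibniz[OF X]
      vector_field_leibniz[OF Y] vector_field_apply_add[OF X] vector_field_apply_add[OF Y] algebra_simps)

lemma one_form_zero: "one_form S 0"
  by (simp add: one_form_def zero_mem zero_fun_def)

lemma one_form_diff:
  assumes "one_form S \<eta>" and "one_form S \<beta>"
  shows "one_form S (\<eta> - \<beta>)"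
  using assms unfolding one_form_def fun_diff_def
  by (auto simp: one_form_mem one_form_outside one_form_linear diff_mem algebra_simps)

lemma one_form_apply_add:
  assumes "one_form S \<eta>" and "vector_field S X" and "vector_field S Y"
  shows "\<eta> (X + Y) = \<eta> X + \<eta> Y"
proof -
  have "vf_smul e X = X"
    using assms(2) by (simp add: vf_smul_def fun_eq_iff vector_field_unit_mult)
  then show ?thesis
    using one_form_linear[OF assms(1) unit_mem assms(2,3)]
    by (simp add: one_form_unit_mult[OF assms(1)] plus_fun_def)
qed

lemma one_form_apply_zero:
  assumes "one_form S \<eta>"
  shows "\<eta> 0 = 0"
  using one_form_apply_add[OF assms vector_field_zero vector_field_zero] by simp

lemma one_form_apply_vf_smul:
  assumes "one_form S \<eta>" and "f \<in> S" and "vector_field S X"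
  shows "\<eta> (vf_smul f X) = (\<lambda>x. f x * \<eta> X x)"
  using one_form_linear[OF assms vector_field_zero] one_form_apply_zero[OF assms(1)] by simp

lemma one_form_apply_diff:
  assumes "one_form S \<eta>" and "vector_field S X" and "vector_field S Y"
  shows "\<eta> (X - Y) = \<eta> X - \<eta> Y"
  using one_form_linear[OF assms(1) minus_unit_mem assms(3,2)]
  by (simp add: vf_smul_minus_unit[OF assms(3)] one_form_unit_mult[OF assms(1)] fun_diff_def)

lemma connection_diff_left:
  assumes "affine_connection S nabla"
    and "vector_field S X" and "vector_field S Y" and "vector_field S Z"
  shows "nabla (X - Y) Z = nabla X Z - nabla Y Z"
  using connection_linear_left[OF assms(1) minus_unit_mem assms(3,2,4)]
  by (simp add: vf_smul_minus_unit assms connection_vector_field)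

lemma one_form_nabla_form:
  assumes c: "affine_connection S nabla" and X: "vector_field S X" and \<beta>: "one_form S \<beta>"
  shows "one_form S (nabla_form S nabla X \<beta>)"
proof -
  have linear: "nabla_form S nabla X \<beta> (vf_smul f Y + Z) =
      (\<lambda>x. f x * nabla_form S nabla X \<beta> Y x + nabla_form S nabla X \<beta> Z x)"
    if f: "f \<in> S" and Y: "vector_field S Y" and Z: "vector_field S Z" for f Y Z
  proof -
    have fY: "vector_field S (vf_smul f Y)" by (rule vector_field_vf_smul[OF f Y])
    have Xf: "X f \<in> S" by (rule vector_field_mem[OF X f])
    have "X (\<beta> (vf_smul f Y + Z)) = (\<lambda>x. f x * X (\<beta> Y) x + \<beta> Y x * X f x + X (\<beta> Z) x)"
      using one_form_linear[OF \<beta> f Y Z]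
        vector_field_apply_add[OF X mult_mem[OF f one_form_mem[OF \<beta> Y]] one_form_mem[OF \<beta> Z]]
        vector_field_leibniz[OF X f one_form_mem[OF \<beta> Y]]
      by simp
    moreover have "\<beta> (nabla X (vf_smul f Y + Z)) =
        (\<lambda>x. X f x * \<beta> Y x + f x * \<beta> (nabla X Y) x + \<beta> (nabla X Z) x)"
      using connection_add_right[OF c X fY Z] connection_leibniz[OF c f X Y]
        one_form_apply_add[OF \<beta>] one_form_apply_vf_smul[OF \<beta>]
        vector_field_add vector_field_vf_smul connection_vector_field[OF c] X Y Z f Xf
      by (simp add: plus_fun_def)
    ultimately show ?thesis
      unfolding nabla_form_def using vector_field_add[OF fY Z] Y Z one_form_linear[OF \<beta> f Y Z]
      by (simp add: algebra_simps)
  qed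
  show ?thesis
    unfolding one_form_def vf_add_eq_plus
    using linear
    by (auto simp: nabla_form_def diff_mem vector_field_mem[OF X] one_form_mem[OF \<beta>]
        connection_vector_field[OF c X])
qed

lemma lie_diff_left:
  assumes "vector_field S X" and "vector_field S Y" and "vector_field S Z"
  shows "lie S (X - Y) Z = lie S X Z - lie S Y Z"
  using vector_field_apply_diff[OF assms(3) vector_field_mem[OF assms(1)] vector_field_mem[OF assms(2)]]
  by (auto simp: lie_def fun_eq_iff fun_diff_def)

lemma lie_diff_right:
  assumes "vector_field S X" and "vector_field S Y" and "vector_field S Z"
  shows "lie S Z (X - Y) = lie S Z X - lie S Z Y"
  using vector_field_apply_diff[OF assms(3) vector_field_mem[OF assms(1)] vector_field_mem[OF assms(2)]]
  by (auto simp: lie_def fun_eq_iff fun_diff_def)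

lemma nabla_form_diff_left:
  assumes c: "affine_connection S nabla" and X: "vector_field S X" and Y: "vector_field S Y"
    and \<beta>: "one_form S \<beta>"
  shows "nabla_form S nabla (X - Y) \<beta> = nabla_form S nabla X \<beta> - nabla_form S nabla Y \<beta>"
proof (rule ext)
  fix Z
  show "nabla_form S nabla (X - Y) \<beta> Z = (nabla_form S nabla X \<beta> - nabla_form S nabla Y \<beta>) Z"
  proof (cases "vector_field S Z")
    case True
    then show ?thesis
      unfolding nabla_form_def connection_diff_left[OF c X Y True]
        one_form_apply_diff[OF \<beta> connection_vector_field[OF c X True] connection_vector_field[OF c Y True]]
      by (simp add: fun_diff_def algebra_simps)
  qed (simp add: nabla_form_def fun_eq_iff)
qed

lemma nabla_form_diff_right:
  assumes X: "vector_field S X" and \<beta>: "one_form S \<beta>" and \<gamma>: "one_form S \<gamma>"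
  shows "nabla_form S nabla X (\<beta> - \<gamma>) = nabla_form S nabla X \<beta> - nabla_form S nabla X \<gamma>"
proof (rule ext)
  fix Z
  show "nabla_form S nabla X (\<beta> - \<gamma>) Z = (nabla_form S nabla X \<beta> - nabla_form S nabla X \<gamma>) Z"
  proof (cases "vector_field S Z")
    case True
    then show ?thesis
      using vector_field_apply_diff[OF X one_form_mem[OF \<beta> True] one_form_mem[OF \<gamma> True]]
      by (simp add: nabla_form_def fun_eq_iff fun_diff_def)
  qed (simp add: nabla_form_def fun_eq_iff)
qed

lemma biadditive_on_nabla_bracket:
  assumes c: "affine_connection S nabla"
  shows "biadditive_on (gsections S) (nabla_bracket S nabla)"
proof
  show "0 \<in> gsections S"
    by (simp add: gsections_def zero_prod_def vector_field_zero one_form_zero)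
  fix u v w assume u: "u \<in> gsections S" and v: "v \<in> gsections S" and w: "w \<in> gsections S"
  then show "u - v \<in> gsections S"
    by (auto simp: gsections_def vector_field_diff one_form_diff)
  from u v show "nabla_bracket S nabla u v \<in> gsections S"
    by (auto simp: gsections_def nabla_bracket_def vector_field_lie one_form_nabla_form[OF c]
        one_form_diff[unfolded fun_diff_def])
  from u v w show "nabla_bracket S nabla (u - v) w = nabla_bracket S nabla u w - nabla_bracket S nabla v w"
    by (auto simp: gsections_def nabla_bracket_def lie_diff_left nabla_form_diff_left[OF c]
        nabla_form_diff_right fun_eq_iff)
  from u v w show "nabla_bracket S nabla w (u - v) = nabla_bracket S nabla w u - nabla_bracket S nabla w v"
    by (auto simp: gsections_def nabla_bracket_def lie_diff_right nabla_form_diff_left[OF c]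
        nabla_form_diff_right fun_eq_iff)
qed

lemma bundle_endo_additive:
  assumes K: "bundle_endo S K"
  shows "additive_endo_on (gsections S) K"
  unfolding additive_endo_on_def
proof (intro conjI ballI)
  fix \<sigma> \<tau> assume \<sigma>: "\<sigma> \<in> gsections S" and \<tau>: "\<tau> \<in> gsections S"
  have "K (sec_add (sec_smul (\<lambda>x. - e x) \<tau>) \<sigma>) = sec_add (sec_smul (\<lambda>x. - e x) (K \<tau>)) (K \<sigma>)"
    using K minus_unit_mem \<sigma> \<tau> unfolding bundle_endo_def by blast
  moreover have "K \<tau> \<in> gsections S"
    using K \<tau> unfolding bundle_endo_def by blast
  ultimately show "K (\<sigma> - \<tau>) = K \<sigma> - K \<tau>"
    by (simp add: sec_smul_minus_unit \<tau>)
qed (use K in \<open>simp add: bundle_endo_def\<close>)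

lemma gen_almost_paraquaternionic_integrability:
  assumes c: "affine_connection S nabla" and J: "gen_almost_paraquaternionic S J1 J2 J3"
  shows "(nabla_integrable S nabla J1 \<and> nabla_integrable S nabla J2 \<longrightarrow> nabla_integrable S nabla J3)
       \<and> (nabla_integrable S nabla J2 \<and> nabla_integrable S nabla J3 \<longrightarrow> nabla_integrable S nabla J1)"
proof -
  let ?G = "gsections S" and ?b = "nabla_bracket S nabla"
  interpret biadditive_on ?G ?b by (rule biadditive_on_nabla_bracket[OF c])
  have integrable_iff: "nabla_integrable S nabla K \<longleftrightarrow> (\<forall>u\<in>?G. \<forall>v\<in>?G. nijenhuis ?b K u v = 0)" for K
    by (simp add: nabla_integrable_def nabla_nijenhuis_eq nijenhuis_def sec_zero_eq_zero)
  have additive: "additive_endo_on ?G J1" "additive_endo_on ?G J2" "additive_endo_on ?G J3"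
    using J bundle_endo_additive by (auto simp: gen_almost_paraquaternionic_def)
  have J11: "J1 (J1 u) = - u" and J22: "J2 (J2 u) = u" and J33: "J3 (J3 u) = u"
    and J21: "J2 (J1 u) = - J1 (J2 u)" and J3: "J3 u = J1 (J2 u)" if "u \<in> ?G" for u
    using J that by (auto simp: gen_almost_paraquaternionic_def sec_neg_eq_uminus)
  have J1: "J1 u = J3 (J2 u)" and J23: "J2 (J3 u) = - J3 (J2 u)" if "u \<in> ?G" for u
    using J3 J21 J22 endo_mem[OF additive(2)] that by simp_all
  show ?thesis
    unfolding integrable_iff
    using nijenhuis_product_vanishes[OF additive(1,2) _ J22 J21 J3 _ _ gsec_no_2_torsion]
      nijenhuis_product_vanishes[OF additive(3,2) _ J22 J23 J1 _ _ gsec_no_2_torsion] J11 J33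
    by blast
qed

end

section \<open>Smooth functions on a manifold\<close>

lemma Ck_cong:
  assumes "open U" and "\<And>x. x \<in> U \<Longrightarrow> f x = g x" and "Ck k U f"
  shows "Ck k U g"
  using assms(2,3)
proof (induction k arbitrary: f g)
  case 0
  then show ?case using continuous_on_cong by (metis Ck.simps(1))
next
  case (Suc k)
  have deriv: "(g has_derivative frechet_derivative f (at x)) (at x)" if "x \<in> U" for x
  proof -
    have "(f has_derivative frechet_derivative f (at x)) (at x)"
      using Suc.prems(2) that by (simp add: frechet_derivative_works)
    then show ?thesis by (rule has_derivative_transform_within_open[OF _ assms(1) that Suc.prems(1)])
  qed
  then have "frechet_derivative g (at x) = frechet_derivative f (at x)" if "x \<in> U" for x
    using frechet_derivative_at that by metis
  then show ?case
    using Suc.prems(2) deriv Suc.IH[of "\<lambda>x. frechet_derivative f (at x) v" "\<lambda>x. frechet_derivative g (at x) v" for v]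
    by (auto simp: differentiable_def)
qed

lemma Ck_const: "Ck k U (\<lambda>x. c)"
proof (induction k arbitrary: c)
  case (Suc k)
  have "frechet_derivative (\<lambda>x. c) (at x) = (\<lambda>v. 0)" for x
    using frechet_derivative_at[OF has_derivative_const] by metis
  then show ?case using Suc by simp
qed simp

lemma Ck_Suc_imp_Ck: "Ck (Suc k) U f \<Longrightarrow> Ck k U f"
proof (induction k arbitrary: f)
  case 0
  then show ?case
    by (auto intro!: continuous_at_imp_continuous_on differentiable_imp_continuous_within)
next
  case (Suc k)
  then show ?case by (simp only: Ck.simps) blast
qed

lemma Ck_linear_combination:
  fixes f g :: "'a::euclidean_space \<Rightarrow> 'b::real_normed_vector"
  assumes "open U" and "Ck k U f" and "Ck k U g"
  shows "Ck k U (\<lambda>x. a *\<^sub>R f x + b *\<^sub>R g x)"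
  using assms(2,3)
proof (induction k arbitrary: f g)
  case 0
  then show ?case by (auto intro!: continuous_intros)
next
  case (Suc k)
  let ?Df = "\<lambda>x. frechet_derivative f (at x)" and ?Dg = "\<lambda>x. frechet_derivative g (at x)"
  have deriv: "((\<lambda>x. a *\<^sub>R f x + b *\<^sub>R g x) has_derivative (\<lambda>v. a *\<^sub>R ?Df x v + b *\<^sub>R ?Dg x v)) (at x)"
    if "x \<in> U" for x
    using Suc.prems that by (auto intro!: derivative_eq_intros frechet_derivative_works[THEN iffD1])
  have "Ck k U (\<lambda>x. frechet_derivative (\<lambda>x. a *\<^sub>R f x + b *\<^sub>R g x) (at x) v)" for v
  proof (rule Ck_cong[OF assms(1)])
    show "Ck k U (\<lambda>x. a *\<^sub>R ?Df x v + b *\<^sub>R ?Dg x v)" using Suc by simp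
  next
    fix x assume "x \<in> U"
    then show "a *\<^sub>R ?Df x v + b *\<^sub>R ?Dg x v = frechet_derivative (\<lambda>x. a *\<^sub>R f x + b *\<^sub>R g x) (at x) v"
      using fun_cong[OF frechet_derivative_at[OF deriv[OF \<open>x \<in> U\<close>]], of v] by simp
  qed
  then show ?case using deriv by (simp add: differentiable_def) blast
qed

lemma Ck_mult:
  fixes f g :: "'a::euclidean_space \<Rightarrow> 'b::real_normed_algebra"
  assumes "open U" and "Ck k U f" and "Ck k U g"
  shows "Ck k U (\<lambda>x. f x * g x)"
  using assms(2,3)
proof (induction k arbitrary: f g)
  case 0
  then show ?case by (auto intro!: continuous_intros)
next
  case (Suc k)
  let ?Df = "\<lambda>x. frechet_derivative f (at x)" and ?Dg = "\<lambda>x. frechet_derivative g (at x)"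
  have deriv: "((\<lambda>x. f x * g x) has_derivative (\<lambda>v. f x * ?Dg x v + ?Df x v * g x)) (at x)"
    if "x \<in> U" for x
    using Suc.prems that by (auto intro!: derivative_eq_intros frechet_derivative_works[THEN iffD1])
  have "Ck k U (\<lambda>x. frechet_derivative (\<lambda>x. f x * g x) (at x) v)" for v
  proof (rule Ck_cong[OF assms(1)])
    have "Ck k U f" "Ck k U g" using Ck_Suc_imp_Ck Suc.prems by blast+
    then have "Ck k U (\<lambda>x. 1 *\<^sub>R (f x * ?Dg x v) + 1 *\<^sub>R (?Df x v * g x))"
      using Suc by (intro Ck_linear_combination[OF assms(1)] Suc.IH) auto
    then show "Ck k U (\<lambda>x. f x * ?Dg x v + ?Df x v * g x)" by simp
  next
    fix x assume "x \<in> U"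
    then show "f x * ?Dg x v + ?Df x v * g x = frechet_derivative (\<lambda>x. f x * g x) (at x) v"
      using fun_cong[OF frechet_derivative_at[OF deriv[OF \<open>x \<in> U\<close>]], of v] by simp
  qed
  then show ?case using deriv by (simp add: differentiable_def) blast
qed

lemma smooth_on_cong: "open U \<Longrightarrow> (\<And>x. x \<in> U \<Longrightarrow> f x = g x) \<Longrightarrow> smooth_on U f \<Longrightarrow> smooth_on U g"
  unfolding smooth_on_def using Ck_cong by blast

lemma smooth_on_const: "smooth_on U (\<lambda>x. c)"
  unfolding smooth_on_def using Ck_const by blast

lemma smooth_on_linear_combination:
  "open U \<Longrightarrow> smooth_on U f \<Longrightarrow> smooth_on U g \<Longrightarrow> smooth_on U (\<lambda>x. a *\<^sub>R f x + b *\<^sub>R g x)"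
  unfolding smooth_on_def using Ck_linear_combination by blast

lemma smooth_on_mult:
  fixes f g :: "'a::euclidean_space \<Rightarrow> 'b::real_normed_algebra"
  shows "open U \<Longrightarrow> smooth_on U f \<Longrightarrow> smooth_on U g \<Longrightarrow> smooth_on U (\<lambda>x. f x * g x)"
  unfolding smooth_on_def using Ck_mult by blast

lemma unital_function_algebra_smooth_functions:
  assumes "smooth_manifold T A"
  shows "unital_function_algebra (smooth_functions T A) (\<lambda>x. if x \<in> topspace T then 1 else 0)"
proof
  have chart: "open (\<phi> ` U)" "U \<subseteq> topspace T" if "(\<phi>, U) \<in> A" for \<phi> U
    using assms that openin_subset unfolding smooth_manifold_def by fastforce+
  show "(\<lambda>x. 0) \<in> smooth_functions T A"
    by (simp add: smooth_functions_def o_def smooth_on_const)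
  have "smooth_on (\<phi> ` U) ((\<lambda>x. if x \<in> topspace T then 1 else 0) \<circ> inv_into U \<phi>)"
    if "(\<phi>, U) \<in> A" for \<phi> U
    using chart[OF that]
    by (intro smooth_on_cong[OF chart(1)[OF that] _ smooth_on_const[of _ 1]]) (auto simp: inv_into_into subsetD)
  then show "(\<lambda>x. if x \<in> topspace T then 1 else 0) \<in> smooth_functions T A"
    by (auto simp: smooth_functions_def)
  fix f g assume f: "f \<in> smooth_functions T A" and g: "g \<in> smooth_functions T A"
  show "(\<lambda>x. a * f x + b * g x) \<in> smooth_functions T A" for a b
    using f g smooth_on_linear_combination[OF chart(1), of _ _ "f \<circ> inv_into _ _" "g \<circ> inv_into _ _" a b]
    by (fastforce simp: smooth_functions_def o_def)
  show "(\<lambda>x. f x * g x) \<in> smooth_functions T A"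
    using f g smooth_on_mult[OF chart(1), of _ _ "f \<circ> inv_into _ _" "g \<circ> inv_into _ _"]
    by (fastforce simp: smooth_functions_def o_def)
  show "(if x \<in> topspace T then 1 else 0) * f x = f x" for x
    using f by (simp add: smooth_functions_def)
qed

theorem proposition2p12:
  fixes T :: "'m topology"
    and A :: "(('m \<Rightarrow> 'e::euclidean_space) \<times> 'm set) set"
    and nabla :: "'m vfield \<Rightarrow> 'm vfield \<Rightarrow> 'm vfield"
    and J1 J2 J3 :: "'m gsec \<Rightarrow> 'm gsec"
  assumes "smooth_manifold T A"
    and "affine_connection (smooth_functions T A) nabla"
    and "gen_almost_paraquaternionic (smooth_functions T A) J1 J2 J3"
  shows "(nabla_integrable (smooth_functions T A) nabla J1 \<and> nabla_integrable (smooth_functions T A) nabla J2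
            \<longrightarrow> nabla_integrable (smooth_functions T A) nabla J3)
       \<and> (nabla_integrable (smooth_functions T A) nabla J2 \<and> nabla_integrable (smooth_functions T A) nabla J3
            \<longrightarrow> nabla_integrable (smooth_functions T A) nabla J1)"
  using unital_function_algebra.gen_almost_paraquaternionic_integrability
    [OF unital_function_algebra_smooth_functions[OF assms(1)] assms(2,3)] .

end
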